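(* Let $q$ be a prime power, $d$ a positive divisor of $q-1$, $m=\frac{q-1}{d}$, $\omega$ a primitive root of $\mathbb{F}_q$ and $\zeta=\omega^{m}$. Let $P\in\mathbb{F}_q[T]$ be nonzero with $\deg P\le q-1$. Let $\rho_0<\rho_1<\dots<\rho_{k-1}$ be the distinct values $\operatorname{rem}(n)$ where $n$ ranges over the degrees of the monomials of $P$ with nonzero coefficient, and $\operatorname{rem}(n)$ denotes the unique element of $\{1,\dots,m\}$ congruent to $n$ mod $m$. For $\ell=0,\dots,k-1$ let $\vec v_\ell\in\mathbb{F}_q^d$ have $j$-th entry ($j=0,\dots,d-1$) equal to the coefficient of $T^{jm+\rho_\ell}$ in $P$, and let $\vec b_\ell=(b^{(\ell)}_0,\dots,b^{(\ell)}_{d-1})\in\mathbb{F}_q^d$ be the unique vector with $(\vec v_\ell)_j=\frac1d\sum_{i=0}^{d-1}\zeta^{-ij}b^{(\ell)}_i$ for all $j$. Put $S_0=\{i: b^{(0)}_i\neq0\text{ or } b^{(\ell')}_i=0\text{ for all }\ell'\}$ and $S_\ell=\{i:b^{(\ell)}_i\neq0\}$ for $\ell>0$. Then $P$ is the polynomial form of an index $d$ generalized cyclotomic mapping of $\mathbb{F}_q$ if and only if $P(0)=0$, $k\le d$, and the sets $S_0,\dots,S_{k-1}$ are pairwise disjoint with union $\{0,\dots,d-1\}$. In that case, letting $\ell(i)$ be the index with $i\in S_{\ell(i)}$, $P$ is the polynomial form of $f_\omega(\vec a,\vec r)$ with $a_i=b^{(\ell(i))}_i$ and $r_i=\rho_{\ell(i)}$.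 (The zero polynomial is the polynomial form of $f_\omega((0,\dots,0),(1,\dots,1))$.)
   Context: Let $C_i=\omega^iC$ where $C$ is the index $d$ subgroup of $\mathbb{F}_q^{\ast}$. For $\vec a\in\mathbb{F}_q^d$ and $\vec r\in\{1,\dots,m\}^d$, $f_\omega(\vec a,\vec r):\mathbb{F}_q\to\mathbb{F}_q$ maps $0\mapsto0$ and $x\mapsto a_ix^{r_i}$ for $x\in C_i$; such maps are the index $d$ generalized cyclotomic mappings. The polynomial form of a function $f:\mathbb{F}_q\to\mathbb{F}_q$ is the unique polynomial of degree at most $q-1$ that agrees with $f$ on $\mathbb{F}_q$. *)

theory Defs
  imports "HOL-Computational_Algebra.Polynomial"
begin

definition primitive_root :: "'a::{finite,field} \<Rightarrow> bool" where
  "primitive_root w \<longleftrightarrow> (\<forall>x. x \<noteq> 0 \<longrightarrow> (\<exists>n::nat. x = w ^ n))"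

definition index_subgroup :: "nat \<Rightarrow> 'a::{finite,field} set" where
  "index_subgroup d = {x ^ d | x. x \<noteq> 0}"

definition cyc_coset :: "'a::{finite,field} \<Rightarrow> nat \<Rightarrow> nat \<Rightarrow> 'a set" where
  "cyc_coset w d i = (\<lambda>y. w ^ i * y) ` index_subgroup d"

definition gen_cyc_map ::
  "'a::{finite,field} \<Rightarrow> nat \<Rightarrow> (nat \<Rightarrow> 'a) \<Rightarrow> (nat \<Rightarrow> nat) \<Rightarrow> 'a \<Rightarrow> 'a" where
  "gen_cyc_map w d a r x =
     (if x = 0 then 0
      else (let i = (THE i. i < d \<and> x \<in> cyc_coset w d i) in a i * x ^ r i))"

definition poly_form :: "'a::{finite,field} poly \<Rightarrow> ('a \<Rightarrow> 'a) \<Rightarrow> bool" where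
  "poly_form P f \<longleftrightarrow> degree P \<le> card (UNIV :: 'a set) - 1 \<and> (\<forall>x. poly P x = f x)"

definition rem1 :: "nat \<Rightarrow> nat \<Rightarrow> nat" where
  "rem1 m n = (THE t. t \<in> {1..m} \<and> t mod m = n mod m)"

end

theory Submission
  imports Defs "HOL-Library.Cardinality"
begin

(*
  Every x in the coset C_i = w^i C satisfies x^m = zeta^i, so on C_i the monomial T^(j m + rho)
  takes the value zeta^(i j) x^rho. Grouping the monomials of P by the residue rho = rem(n) gives,
  for x in C_i, P(x) = P(0) + sum_l b^(l)_i x^(rho_l): the vector b^(l) is the discrete Fourier
  transform of v_l. The monomials x^s with 1 <= s <= m are linearly independent as functions on a
  coset (orthogonality of the characters of the cyclic group C of order m). Hence P agrees with
  a_i x^(r_i) on C_i iff b^(l)_i = a_i for rho_l = r_i and b^(l)_i = 0 otherwise. The conditions on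
  the sets S_l say precisely that for each i at most one b^(l)_i is nonzero; and k <= d because
  every v_l is nonzero, hence so is its transform b^(l).
*)

section \<open>Powers in a finite field\<close>

lemma nonzero_power_card_minus_one:
  fixes x :: "'a::{finite,field}"
  assumes "x \<noteq> 0"
  shows "x ^ (CARD('a) - 1) = 1"
proof -
  have "(\<Prod>y\<in>UNIV - {0}. x * y) = (\<Prod>y\<in>UNIV - {0::'a}. y)"
    by (rule prod.reindex_bij_witness[of _ "\<lambda>y. y / x" "\<lambda>y. x * y"]) (use assms in auto)
  moreover have "(\<Prod>y\<in>UNIV - {0}. x * y) = x ^ (CARD('a) - 1) * (\<Prod>y\<in>UNIV - {0::'a}. y)"
    by (simp add: prod.distrib card_Diff_singleton)
  moreover have "(\<Prod>y\<in>UNIV - {0::'a}. y) \<noteq> 0"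
    by simp
  ultimately show ?thesis
    by simp
qed

lemma of_nat_card_eq_0: "(of_nat CARD('a) :: 'a::{finite,ring_1}) = 0"
proof -
  have "(\<Sum>y\<in>UNIV. 1 + y) = (\<Sum>y::'a\<in>UNIV. y)"
    by (rule sum.reindex_bij_witness[of _ "\<lambda>y. y - 1" "\<lambda>y. 1 + y"]) auto
  then show ?thesis
    by (simp add: sum.distrib)
qed

lemma card_UNIV_ge_2: "2 \<le> CARD('a::{finite,zero_neq_one})"
  using card_mono[of UNIV "{0::'a, 1}"] by simp

lemma of_nat_dvd_card_minus_one_neq_0:
  assumes "n dvd CARD('a) - 1"
  shows "(of_nat n :: 'a::{finite,field}) \<noteq> 0"
proof
  assume n: "(of_nat n :: 'a) = 0"
  obtain c where "CARD('a) - 1 = n * c"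
    using assms by blast
  then have "(of_nat (CARD('a) - 1) :: 'a) = 0"
    by (simp add: n)
  moreover have "(of_nat (CARD('a) - 1) :: 'a) = - 1"
    using card_UNIV_ge_2[where 'a='a] by (simp add: of_nat_card_eq_0)
  ultimately show False
    by simp
qed

(* The definition admits w = 0 in the field with two elements (as 0 ^ 0 = 1), so w \<noteq> 0 cannot
   be assumed in the following lemmas. *)
lemma primitive_root_powers_bij:
  fixes w :: "'a::{finite,field}"
  assumes "primitive_root w"
  shows "bij_betw (\<lambda>n. w ^ n) {..<CARD('a) - 1} (UNIV - {0})"
proof -
  let ?I = "{..<CARD('a) - 1}"
  have cover: "UNIV - {0} \<subseteq> (\<lambda>n. w ^ n) ` ?I"
  proof
    fix x :: 'a
    assume "x \<in> UNIV - {0}"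
    then obtain n where x: "x = w ^ n" "x \<noteq> 0"
      using assms unfolding primitive_root_def by auto
    show "x \<in> (\<lambda>n. w ^ n) ` ?I"
    proof (cases "n = 0")
      case True
      then show ?thesis
        using x card_UNIV_ge_2[where 'a='a] by (intro image_eqI[of _ _ 0]) auto
    next
      case False
      then have "w \<noteq> 0"
        using x by auto
      have "w ^ n = (w ^ (CARD('a) - 1)) ^ (n div (CARD('a) - 1)) * w ^ (n mod (CARD('a) - 1))"
        by (simp flip: power_mult power_add)
      then have "x = w ^ (n mod (CARD('a) - 1))"
        using x nonzero_power_card_minus_one[OF \<open>w \<noteq> 0\<close>] by simp
      then show ?thesis
        using card_UNIV_ge_2[where 'a='a] by (intro image_eqI) auto
    qed
  qed
  have "card ((\<lambda>n. w ^ n) ` ?I) \<le> card (UNIV - {0::'a})"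
    using card_image_le[of ?I "\<lambda>n. w ^ n"] by (simp add: card_Diff_singleton)
  then have image: "(\<lambda>n. w ^ n) ` ?I = UNIV - {0}"
    using cover by (intro card_seteq[symmetric]) auto
  then have "inj_on (\<lambda>n. w ^ n) ?I"
    by (intro eq_card_imp_inj_on) (simp_all add: card_Diff_singleton)
  with image show ?thesis
    by (simp add: bij_betw_def)
qed

lemma primitive_root_power_neq_0:
  fixes w :: "'a::{finite,field}"
  assumes "primitive_root w" "n < CARD('a) - 1"
  shows "w ^ n \<noteq> 0"
  using bij_betwE[OF primitive_root_powers_bij[OF assms(1)]] assms(2) by blast

lemma primitive_root_power_inj:
  fixes w :: "'a::{finite,field}"
  assumes "primitive_root w" "i < CARD('a) - 1" "j < CARD('a) - 1" "w ^ i = w ^ j"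
  shows "i = j"
  using primitive_root_powers_bij[OF assms(1)] assms(2-) by (auto simp: bij_betw_def inj_on_def)

lemma sum_powers_of_primitive_root_power:
  fixes w :: "'a::{finite,field}"
  assumes w: "primitive_root w" and en: "e * n = CARD('a) - 1"
  shows "(\<Sum>t<n. (w ^ e) ^ (t * a) * inverse (w ^ e) ^ (t * c)) =
         (if a mod n = c mod n then of_nat n else 0)"
proof (cases "n = 1")
  case True
  then show ?thesis
    by simp
next
  case False
  define z where "z = w ^ e"
  have "e * n \<noteq> 0"
    using en card_UNIV_ge_2[where 'a='a] by simp
  then have "1 < n" "0 < e"
    using False by auto
  moreover have "n \<le> e * n"
    using \<open>0 < e\<close> by simp
  ultimately have "1 < CARD('a) - 1"
    using en by linarith
  then have "w \<noteq> 0"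
    using primitive_root_power_neq_0[OF w, of 1] by auto
  then have zn: "z ^ n = 1"
    using nonzero_power_card_minus_one[OF \<open>w \<noteq> 0\<close>] by (simp add: z_def en flip: power_mult)
  have z_mod: "z ^ s = z ^ (s mod n)" for s
  proof -
    have "z ^ s = (z ^ n) ^ (s div n) * z ^ (s mod n)"
      by (simp flip: power_mult power_add)
    then show ?thesis
      by (simp add: zn)
  qed
  define u where "u = z ^ a * inverse z ^ c"
  have u_power: "z ^ (t * a) * inverse z ^ (t * c) = u ^ t" for t
    by (simp add: u_def power_mult_distrib mult.commute[of t] power_mult)
  have sum_u: "(\<Sum>t<n. (w ^ e) ^ (t * a) * inverse (w ^ e) ^ (t * c)) = (\<Sum>t<n. u ^ t)"
    unfolding z_def[symmetric] u_power ..
  show ?thesis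
  proof (cases "a mod n = c mod n")
    case True
    then have "u = 1"
      using z_mod[of a] z_mod[of c] \<open>w \<noteq> 0\<close> by (simp add: u_def z_def power_inverse)
    then show ?thesis
      using True sum_u by simp
  next
    case False
    have "z ^ (a mod n) \<noteq> z ^ (c mod n)"
    proof
      assume "z ^ (a mod n) = z ^ (c mod n)"
      then have "w ^ (e * (a mod n)) = w ^ (e * (c mod n))"
        by (simp add: z_def power_mult)
      moreover have "e * (a mod n) < CARD('a) - 1" "e * (c mod n) < CARD('a) - 1"
        unfolding en[symmetric] using \<open>1 < n\<close> \<open>0 < e\<close> by simp_all
      ultimately have "e * (a mod n) = e * (c mod n)"
        by (rule primitive_root_power_inj[OF w, rotated -1])
      then show False
        using False \<open>0 < e\<close> by simp
    qed
    then have "z ^ a \<noteq> z ^ c"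
      using z_mod[of a] z_mod[of c] by simp
    then have "u \<noteq> 1"
      using \<open>w \<noteq> 0\<close> by (simp add: u_def z_def power_inverse flip: divide_inverse)
    moreover have "u ^ n = (z ^ n) ^ a * inverse ((z ^ n) ^ c)"
      by (simp add: u_def power_mult_distrib power_inverse flip: power_mult) (simp add: mult.commute)
    ultimately show ?thesis
      using False sum_u zn by (simp add: sum_gp_strict)
  qed
qed

section \<open>Remainders in {1..m}\<close>

lemma rem1_eq:
  assumes "0 < m"
  shows "rem1 m n = (if n mod m = 0 then m else n mod m)"
  unfolding rem1_def
proof (rule the_equality)
  fix t
  assume "t \<in> {1..m} \<and> t mod m = n mod m"
  then show "t = (if n mod m = 0 then m else n mod m)"
    using assms by (cases "t = m") (auto dest: le_neq_implies_less)
qed (use assms in \<open>auto simp: less_imp_le_nat\<close>)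

lemma rem1_in_range: "0 < m \<Longrightarrow> rem1 m n \<in> {1..m}"
  by (simp add: rem1_eq)

lemma inj_on_mod_1_to_m: "inj_on (\<lambda>s. s mod m) {1..m::nat}"
proof (rule inj_onI)
  fix s t
  have mod_eq: "u mod m = (if u = m then 0 else u)" if "u \<in> {1..m}" for u
    using that by (cases "u = m") auto
  assume "s \<in> {1..m}" "t \<in> {1..m}" "s mod m = t mod m"
  then show "s = t"
    using mod_eq[of s] mod_eq[of t] by (auto split: if_splits)
qed

lemma rem1_decomposition:
  assumes m: "0 < m" and n: "1 \<le> n" "n \<le> D * m"
  shows "\<exists>j<D. n = j * m + rem1 m n"
proof (cases "n mod m = 0")
  case True
  then obtain q where q: "n = q * m"
    by (metis mod_eq_0_iff_dvd dvd_def mult.commute)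
  then have "0 < q" "q \<le> D"
    using n m by simp_all
  moreover have "n = (q - 1) * m + m"
    using q \<open>0 < q\<close> by (cases q) auto
  ultimately show ?thesis
    using True m by (intro exI[of _ "q - 1"]) (simp add: rem1_eq)
next
  case False
  then have "n \<noteq> D * m"
    by auto
  then have "n < D * m"
    using n by simp
  then have "n div m < D"
    using m by (simp add: div_less_iff_less_mult)
  then show ?thesis
    using False m by (intro exI[of _ "n div m"]) (simp add: rem1_eq)
qed

lemma sum_by_rem1_classes:
  fixes h :: "nat \<Rightarrow> 'b::comm_monoid_add"
  assumes m: "0 < m" and \<rho>: "bij_betw \<rho> {..<k} R" and R: "R \<subseteq> {1..m}"
    and supp: "\<And>n. n \<in> {1..D * m} \<Longrightarrow> h n \<noteq> 0 \<Longrightarrow> rem1 m n \<in> R"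
  shows "(\<Sum>n\<in>{1..D * m}. h n) = (\<Sum>l<k. \<Sum>j<D. h (j * m + \<rho> l))"
proof -
  define F where "F = (\<lambda>(l, j). j * m + \<rho> l)"
  have \<rho>_range: "\<rho> l \<in> {1..m}" if "l < k" for l
    using bij_betwE[OF \<rho>] R that by blast
  have inj: "inj_on F ({..<k} \<times> {..<D})"
  proof (rule inj_onI, clarsimp simp: F_def)
    fix l j l' j'
    assume lj: "l < k" "l' < k" "j * m + \<rho> l = j' * m + \<rho> l'"
    then have "\<rho> l mod m = \<rho> l' mod m"
      by (metis mod_mult_self3)
    then have "\<rho> l = \<rho> l'"
      by (rule inj_onD[OF inj_on_mod_1_to_m]) (use \<rho>_range lj in auto)
    then have "l = l'"
      using \<rho> lj(1,2) by (auto simp: bij_betw_def dest: inj_onD)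
    then show "l = l' \<and> j = j'"
      using lj(3) m by simp
  qed
  have image_sub: "F ` ({..<k} \<times> {..<D}) \<subseteq> {1..D * m}"
  proof clarsimp
    fix l j
    assume "l < k" "j < D"
    then have "\<rho> l \<in> {1..m}" "Suc j * m \<le> D * m"
      using \<rho>_range by (simp_all only: Suc_leI mult_le_mono1)
    then show "Suc 0 \<le> F (l, j) \<and> F (l, j) \<le> D * m"
      by (simp add: F_def)
  qed
  have supp_sub: "n \<in> F ` ({..<k} \<times> {..<D})" if n: "n \<in> {1..D * m}" and "h n \<noteq> 0" for n
  proof -
    obtain l where "l < k" "\<rho> l = rem1 m n"
      using supp[OF n \<open>h n \<noteq> 0\<close>] \<rho> by (metis bij_betw_iff_bijections lessThan_iff)
    moreover obtain j where "j < D" "n = j * m + rem1 m n"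
      using rem1_decomposition[OF m] n by auto
    ultimately show ?thesis
      by (auto simp: F_def intro!: image_eqI[of _ _ "(l, j)"])
  qed
  from supp_sub have "\<forall>n\<in>{1..D * m} - F ` ({..<k} \<times> {..<D}). h n = 0"
    by blast
  then have "(\<Sum>n\<in>{1..D * m}. h n) = (\<Sum>n\<in>F ` ({..<k} \<times> {..<D}). h n)"
    using image_sub by (intro sum.mono_neutral_right) simp_all
  also have "\<dots> = (\<Sum>(l, j)\<in>{..<k} \<times> {..<D}. h (j * m + \<rho> l))"
    by (subst sum.reindex[OF inj]) (simp add: F_def case_prod_unfold comp_def)
  finally show ?thesis
    by (simp add: sum.cartesian_product)
qed

section \<open>Cosets of the subgroup of d-th powers\<close>

lemma mem_cyc_coset_iff: "x \<in> cyc_coset w d i \<longleftrightarrow> (\<exists>y. y \<noteq> 0 \<and> x = w ^ i * y ^ d)"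
  unfolding cyc_coset_def index_subgroup_def by auto

lemma poly_form_gen_cyc_map_at_0: "poly_form P (gen_cyc_map w d a r) \<Longrightarrow> poly P 0 = 0"
  by (simp add: poly_form_def gen_cyc_map_def)

locale cyclotomic_setting =
  fixes w :: "'a::{finite,field}" and d m :: nat and \<zeta> :: 'a
  assumes d_pos: "0 < d"
    and d_dvd: "d dvd CARD('a) - 1"
    and primitive: "primitive_root w"
    and m_eq: "m = (CARD('a) - 1) div d"
    and zeta_eq: "\<zeta> = w ^ m"
begin

lemma d_mult_m: "d * m = CARD('a) - 1"
  using d_dvd by (simp add: m_eq)

lemma m_pos: "0 < m"
  using d_mult_m card_UNIV_ge_2[where 'a='a] by (cases m) auto

lemma of_nat_d_neq_0: "(of_nat d :: 'a) \<noteq> 0"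
  using d_dvd by (rule of_nat_dvd_card_minus_one_neq_0)

lemma of_nat_m_neq_0: "(of_nat m :: 'a) \<noteq> 0"
  using d_mult_m by (intro of_nat_dvd_card_minus_one_neq_0) (metis dvd_triv_right)

lemma w_power_neq_0: "n < d * m \<Longrightarrow> w ^ n \<noteq> 0"
  using primitive_root_power_neq_0[OF primitive] by (simp add: d_mult_m)

lemma zeta_power_inj:
  assumes "i < d" "j < d" "\<zeta> ^ i = \<zeta> ^ j"
  shows "i = j"
proof -
  have "m * i < CARD('a) - 1" "m * j < CARD('a) - 1"
    unfolding d_mult_m[symmetric] using assms(1,2) m_pos by (simp_all add: mult.commute[of d])
  moreover have "w ^ (m * i) = w ^ (m * j)"
    using assms(3) by (simp add: zeta_eq power_mult)
  ultimately have "m * i = m * j"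
    by (rule primitive_root_power_inj[OF primitive])
  then show ?thesis
    using m_pos by simp
qed

lemma cyc_coset_power_m:
  assumes "i < d" "x \<in> cyc_coset w d i"
  shows "x \<noteq> 0" "x ^ m = \<zeta> ^ i"
proof -
  obtain y where y: "y \<noteq> 0" "x = w ^ i * y ^ d"
    using assms(2) mem_cyc_coset_iff by blast
  have "w ^ i \<noteq> 0"
    using assms(1) m_pos by (intro w_power_neq_0) (simp add: less_le_trans)
  then show "x \<noteq> 0"
    using y by simp
  have "x ^ m = (w ^ m) ^ i * y ^ (d * m)"
    by (simp add: y power_mult_distrib flip: power_mult) (simp add: mult.commute)
  then show "x ^ m = \<zeta> ^ i"
    using nonzero_power_card_minus_one[OF y(1)] by (simp add: d_mult_m zeta_eq)
qed

lemma cyc_coset_cover: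
  assumes "x \<noteq> 0"
  shows "\<exists>i<d. x \<in> cyc_coset w d i"
proof -
  obtain n where "x = w ^ n"
    using primitive assms unfolding primitive_root_def by blast
  then have x: "x = w ^ (n mod d) * (w ^ (n div d)) ^ d"
    by (simp flip: power_mult power_add add: mult.commute)
  then have "w ^ (n div d) \<noteq> 0"
    using assms d_pos by auto
  then have "x \<in> cyc_coset w d (n mod d)"
    unfolding mem_cyc_coset_iff using x by blast
  then show ?thesis
    using d_pos mod_less_divisor by blast
qed

lemma cyc_coset_unique:
  "i < d \<Longrightarrow> j < d \<Longrightarrow> x \<in> cyc_coset w d i \<Longrightarrow> x \<in> cyc_coset w d j \<Longrightarrow> i = j"
  using cyc_coset_power_m zeta_power_inj by metis

lemma gen_cyc_map_on_coset:
  assumes "i < d" "x \<in> cyc_coset w d i"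
  shows "gen_cyc_map w d a r x = a i * x ^ r i"
proof -
  have "(THE i. i < d \<and> x \<in> cyc_coset w d i) = i"
    using assms cyc_coset_unique by blast
  then show ?thesis
    using cyc_coset_power_m(1)[OF assms] by (simp add: gen_cyc_map_def)
qed

lemma coset_monomials_independent:
  assumes i: "i < d" and vanish: "\<forall>x\<in>cyc_coset w d i. (\<Sum>s\<in>{1..m}. c s * x ^ s) = 0"
    and \<sigma>: "\<sigma> \<in> {1..m}"
  shows "c \<sigma> = 0"
proof -
  \<comment> \<open>Evaluate at the m points X t of C_i and use the orthogonality of the powers of g,
    an element of order m.\<close>
  define g where "g = w ^ d"
  define X where "X t = w ^ i * (w ^ t) ^ d" for t
  have X_mem: "X t \<in> cyc_coset w d i" if "t < m" for t
  proof -
    have "w ^ t \<noteq> 0"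
      using that d_pos by (intro w_power_neq_0) (simp add: less_le_trans)
    then show ?thesis
      unfolding X_def mem_cyc_coset_iff by blast
  qed
  have X_power: "X t ^ s = (w ^ i) ^ s * g ^ (t * s)" for t s
    unfolding X_def g_def by (simp add: power_mult_distrib flip: power_mult) (simp add: mult_ac)
  have "0 = (\<Sum>t<m. inverse g ^ (t * \<sigma>) * (\<Sum>s\<in>{1..m}. c s * X t ^ s))"
    using vanish X_mem by simp
  also have "\<dots> = (\<Sum>t<m. \<Sum>s\<in>{1..m}. c s * (w ^ i) ^ s * (g ^ (t * s) * inverse g ^ (t * \<sigma>)))"
    by (simp add: X_power sum_distrib_left mult_ac)
  also have "\<dots> = (\<Sum>s\<in>{1..m}. c s * (w ^ i) ^ s * (\<Sum>t<m. g ^ (t * s) * inverse g ^ (t * \<sigma>)))"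
    by (subst sum.swap) (simp add: sum_distrib_left)
  also have "\<dots> = (\<Sum>s\<in>{1..m}. if s = \<sigma> then c s * (w ^ i) ^ s * of_nat m else 0)"
  proof (rule sum.cong[OF refl])
    fix s
    assume s: "s \<in> {1..m}"
    have "s mod m = \<sigma> mod m \<longleftrightarrow> s = \<sigma>"
      using inj_onD[OF inj_on_mod_1_to_m _ s \<sigma>] by auto
    then show "c s * (w ^ i) ^ s * (\<Sum>t<m. g ^ (t * s) * inverse g ^ (t * \<sigma>)) =
        (if s = \<sigma> then c s * (w ^ i) ^ s * of_nat m else 0)"
      using sum_powers_of_primitive_root_power[OF primitive d_mult_m, of s \<sigma>] by (simp add: g_def)
  qed
  also have "\<dots> = c \<sigma> * (w ^ i) ^ \<sigma> * of_nat m"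
    using \<sigma> by simp
  finally have "c \<sigma> * (w ^ i) ^ \<sigma> * of_nat m = 0" ..
  moreover have "w ^ i \<noteq> 0"
    using i m_pos by (intro w_power_neq_0) (simp add: less_le_trans)
  ultimately show ?thesis
    using of_nat_m_neq_0 by (metis mult_eq_0_iff power_not_zero)
qed

lemma sum_zeta_powers:
  assumes "a < d" "c < d"
  shows "(\<Sum>t<d. \<zeta> ^ (t * a) * inverse \<zeta> ^ (t * c)) = (if a = c then of_nat d else 0)"
  using sum_powers_of_primitive_root_power[OF primitive, of m d a c] assms
  by (simp add: zeta_eq d_mult_m mult.commute[of m])

lemma inverse_dft:
  assumes "j < d"
  shows "inverse (of_nat d) * (\<Sum>i<d. inverse \<zeta> ^ (i * j) * (\<Sum>j'<d. \<zeta> ^ (i * j') * V j')) = V j"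
proof -
  have "(\<Sum>i<d. inverse \<zeta> ^ (i * j) * (\<Sum>j'<d. \<zeta> ^ (i * j') * V j')) =
      (\<Sum>i<d. \<Sum>j'<d. V j' * (\<zeta> ^ (i * j') * inverse \<zeta> ^ (i * j)))"
    by (simp add: sum_distrib_left mult_ac)
  also have "\<dots> = (\<Sum>j'<d. V j' * (\<Sum>i<d. \<zeta> ^ (i * j') * inverse \<zeta> ^ (i * j)))"
    by (subst sum.swap) (simp add: sum_distrib_left)
  also have "\<dots> = (\<Sum>j'<d. if j' = j then V j * of_nat d else 0)"
    by (rule sum.cong[OF refl]) (simp add: sum_zeta_powers assms)
  also have "\<dots> = V j * of_nat d"
    using assms by simp
  finally show ?thesis
    using of_nat_d_neq_0 by simp
qed

lemma dft_of_inverse_dft: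
  assumes "i < d"
  shows "(\<Sum>j<d. \<zeta> ^ (i * j) * (inverse (of_nat d) * (\<Sum>i'<d. inverse \<zeta> ^ (i' * j) * B i'))) = B i"
proof -
  have "(\<Sum>j<d. \<zeta> ^ (i * j) * (inverse (of_nat d) * (\<Sum>i'<d. inverse \<zeta> ^ (i' * j) * B i'))) =
      (\<Sum>j<d. \<Sum>i'<d. inverse (of_nat d) * B i' * (\<zeta> ^ (j * i) * inverse \<zeta> ^ (j * i')))"
    by (simp add: sum_distrib_left mult_ac)
  also have "\<dots> = (\<Sum>i'<d. inverse (of_nat d) * B i' * (\<Sum>j<d. \<zeta> ^ (j * i) * inverse \<zeta> ^ (j * i')))"
    by (subst sum.swap) (simp add: sum_distrib_left)
  also have "\<dots> = (\<Sum>i'<d. if i' = i then inverse (of_nat d) * B i * of_nat d else 0)"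
    by (rule sum.cong[OF refl]) (auto simp: sum_zeta_powers assms)
  finally show ?thesis
    using assms of_nat_d_neq_0 by simp
qed

lemma the_inverse_dft:
  "(THE B. (\<forall>i\<ge>d. B i = 0) \<and>
      (\<forall>j<d. V j = inverse (of_nat d) * (\<Sum>i<d. inverse \<zeta> ^ (i * j) * B i)))
   = (\<lambda>i. if i < d then \<Sum>j<d. \<zeta> ^ (i * j) * V j else 0)"
proof (rule the_equality)
  show "(\<forall>i\<ge>d. (\<lambda>i. if i < d then \<Sum>j<d. \<zeta> ^ (i * j) * V j else 0) i = 0) \<and>
      (\<forall>j<d. V j = inverse (of_nat d) *
         (\<Sum>i<d. inverse \<zeta> ^ (i * j) * (\<lambda>i. if i < d then \<Sum>j<d. \<zeta> ^ (i * j) * V j else 0) i))"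
    by (simp add: inverse_dft)
next
  fix B
  assume B: "(\<forall>i\<ge>d. B i = 0) \<and>
      (\<forall>j<d. V j = inverse (of_nat d) * (\<Sum>i<d. inverse \<zeta> ^ (i * j) * B i))"
  show "B = (\<lambda>i. if i < d then \<Sum>j<d. \<zeta> ^ (i * j) * V j else 0)"
  proof
    fix i
    show "B i = (if i < d then \<Sum>j<d. \<zeta> ^ (i * j) * V j else 0)"
      using B dft_of_inverse_dft[of i B] by (auto intro: sum.cong)
  qed
qed

end

section \<open>Polynomials restricted to the cosets\<close>

locale cyclotomic_poly = cyclotomic_setting w d m \<zeta>
  for w :: "'a::{finite,field}" and d m \<zeta> +
  fixes P :: "'a poly" and R :: "nat set" and k :: nat and \<rho> :: "nat \<Rightarrow> nat"
    and v b :: "nat \<Rightarrow> nat \<Rightarrow> 'a" and S :: "nat \<Rightarrow> nat set" and lidx :: "nat \<Rightarrow> nat"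
  assumes P_nz: "P \<noteq> 0"
    and P_deg: "degree P \<le> CARD('a) - 1"
    and R_eq: "R = {rem1 m n | n. coeff P n \<noteq> 0}"
    and k_eq: "k = card R"
    and rho_eq: "\<rho> = (\<lambda>l. sorted_list_of_set R ! l)"
    and v_eq: "v = (\<lambda>l j. coeff P (j * m + \<rho> l))"
    and b_eq: "b = (\<lambda>l. THE bv :: nat \<Rightarrow> 'a. (\<forall>i\<ge>d. bv i = 0) \<and>
      (\<forall>j<d. v l j = inverse (of_nat d) * (\<Sum>i<d. inverse \<zeta> ^ (i * j) * bv i)))"
    and S_eq: "S = (\<lambda>l. if l = 0
      then {i. i < d \<and> (b 0 i \<noteq> 0 \<or> (\<forall>l'<k. b l' i = 0))}
      else {i. i < d \<and> b l i \<noteq> 0})"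
    and lidx_eq: "lidx = (\<lambda>i. THE l. l < k \<and> i \<in> S l)"
begin

lemma R_subset: "R \<subseteq> {1..m}"
  unfolding R_eq using rem1_in_range[OF m_pos] by blast

lemma rho_bij: "bij_betw \<rho> {..<k} R"
  unfolding rho_eq k_eq
  using R_subset by (intro bij_betw_nth) (auto simp: finite_subset)

lemma rho_range: "l < k \<Longrightarrow> \<rho> l \<in> {1..m}"
  using bij_betwE[OF rho_bij] R_subset by blast

lemma rho_inj: "l < k \<Longrightarrow> l' < k \<Longrightarrow> \<rho> l = \<rho> l' \<Longrightarrow> l = l'"
  using rho_bij by (auto simp: bij_betw_def dest: inj_onD)

lemma k_pos: "0 < k"
proof -
  obtain n where "coeff P n \<noteq> 0"
    using P_nz by (metis leading_coeff_0_iff)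
  then have "R \<noteq> {}"
    by (auto simp: R_eq)
  then show ?thesis
    using R_subset by (simp add: k_eq card_gt_0_iff finite_subset)
qed

lemma b_dft: "b l i = (if i < d then \<Sum>j<d. \<zeta> ^ (i * j) * coeff P (j * m + \<rho> l) else 0)"
  unfolding b_eq v_eq by (simp add: the_inverse_dft)

lemma poly_on_coset:
  assumes "i < d" "x \<in> cyc_coset w d i"
  shows "poly P x = coeff P 0 + (\<Sum>l<k. b l i * x ^ \<rho> l)"
proof -
  have x_power: "x ^ (j * m + s) = \<zeta> ^ (i * j) * x ^ s" for j s
  proof -
    have "x ^ (j * m + s) = (x ^ m) ^ j * x ^ s"
      by (simp add: power_add power_mult mult.commute[of j])
    then show ?thesis
      using cyc_coset_power_m(2)[OF assms] by (simp add: power_mult)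
  qed
  have "poly P x = (\<Sum>n\<le>d * m. coeff P n * x ^ n)"
    unfolding poly_altdef d_mult_m
    by (rule sum.mono_neutral_left) (use P_deg in \<open>auto simp: coeff_eq_0\<close>)
  also have "\<dots> = coeff P 0 + (\<Sum>n\<in>{1..d * m}. coeff P n * x ^ n)"
    by (simp add: atMost_atLeast0 sum.atLeast_Suc_atMost)
  also have "(\<Sum>n\<in>{1..d * m}. coeff P n * x ^ n) =
      (\<Sum>l<k. \<Sum>j<d. coeff P (j * m + \<rho> l) * x ^ (j * m + \<rho> l))"
    by (rule sum_by_rem1_classes[OF m_pos rho_bij R_subset]) (auto simp: R_eq)
  also have "\<dots> = (\<Sum>l<k. b l i * x ^ \<rho> l)"
    using assms(1) by (simp add: b_dft x_power sum_distrib_left sum_distrib_right mult_ac)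
  finally show ?thesis .
qed

lemma b_nonzero_somewhere:
  assumes "coeff P 0 = 0" "l < k"
  shows "\<exists>i<d. b l i \<noteq> 0"
proof (rule ccontr)
  assume "\<not> (\<exists>i<d. b l i \<noteq> 0)"
  then have "(\<Sum>j'<d. \<zeta> ^ (i * j') * coeff P (j' * m + \<rho> l)) = 0" if "i < d" for i
    using b_dft[of l i] that by simp
  then have vanish: "coeff P (j * m + \<rho> l) = 0" if "j < d" for j
    using inverse_dft[OF that, of "\<lambda>j. coeff P (j * m + \<rho> l)"] by simp
  have "\<rho> l \<in> R"
    using bij_betwE[OF rho_bij] assms(2) by blast
  then obtain n where n: "\<rho> l = rem1 m n" "coeff P n \<noteq> 0"
    by (auto simp: R_eq)
  moreover have "n \<noteq> 0"
    using assms(1) n(2) by metis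
  moreover have "n \<le> d * m"
    using le_degree[OF n(2)] P_deg d_mult_m by simp
  ultimately obtain j where "j < d" "n = j * m + \<rho> l"
    using rem1_decomposition[OF m_pos, of n d] by auto
  then show False
    using vanish n(2) by simp
qed

lemma mem_S_iff:
  "i \<in> S l \<longleftrightarrow> i < d \<and> (b l i \<noteq> 0 \<or> l = 0 \<and> (\<forall>l'<k. b l' i = 0))"
  by (auto simp: S_eq)

lemma mem_S_nonzero: "i \<in> S l \<Longrightarrow> l' < k \<Longrightarrow> b l' i \<noteq> 0 \<Longrightarrow> b l i \<noteq> 0"
  by (auto simp: mem_S_iff)

lemma Union_S: "(\<Union>l<k. S l) = {0..<d}"
proof
  show "(\<Union>l<k. S l) \<subseteq> {0..<d}"
    by (auto simp: mem_S_iff)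
  show "{0..<d} \<subseteq> (\<Union>l<k. S l)"
  proof
    fix i
    assume i: "i \<in> {0..<d}"
    show "i \<in> (\<Union>l<k. S l)"
    proof (cases "\<exists>l<k. b l i \<noteq> 0")
      case True
      then show ?thesis
        using i by (auto simp: mem_S_iff)
    next
      case False
      then have "i \<in> S 0"
        using i by (simp add: mem_S_iff)
      then show ?thesis
        using k_pos by blast
    qed
  qed
qed

lemma S_disjoint_iff:
  "(\<forall>l<k. \<forall>l'<k. l \<noteq> l' \<longrightarrow> S l \<inter> S l' = {}) \<longleftrightarrow>
   (\<forall>i<d. \<forall>l<k. \<forall>l'<k. b l i \<noteq> 0 \<longrightarrow> b l' i \<noteq> 0 \<longrightarrow> l = l')"
proof (intro iffI allI impI)
  fix i l l'
  assume disj: "\<forall>l<k. \<forall>l'<k. l \<noteq> l' \<longrightarrow> S l \<inter> S l' = {}"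
    and nz: "i < d" "l < k" "l' < k" "b l i \<noteq> 0" "b l' i \<noteq> 0"
  from nz have "i \<in> S l \<inter> S l'"
    by (simp add: mem_S_iff)
  then show "l = l'"
    using disj \<open>l < k\<close> \<open>l' < k\<close> by blast
next
  fix l l'
  assume uniq: "\<forall>i<d. \<forall>l<k. \<forall>l'<k. b l i \<noteq> 0 \<longrightarrow> b l' i \<noteq> 0 \<longrightarrow> l = l'"
    and "l < k" "l' < k" "l \<noteq> l'"
  show "S l \<inter> S l' = {}"
  proof (rule ccontr)
    assume "S l \<inter> S l' \<noteq> {}"
    then obtain i where i: "i \<in> S l" "i \<in> S l'"
      by blast
    have "\<exists>l0\<in>{l, l'}. b l0 i \<noteq> 0"
    proof (cases "l = 0")
      case True
      then have "l' \<noteq> 0"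
        using \<open>l \<noteq> l'\<close> by simp
      then show ?thesis
        using i(2) by (simp add: mem_S_iff)
    next
      case False
      then show ?thesis
        using i(1) by (simp add: mem_S_iff)
    qed
    then have "b l i \<noteq> 0" "b l' i \<noteq> 0"
      using i mem_S_nonzero \<open>l < k\<close> \<open>l' < k\<close> by blast+
    moreover have "i < d"
      using i by (simp add: mem_S_iff)
    ultimately show False
      using uniq \<open>l < k\<close> \<open>l' < k\<close> \<open>l \<noteq> l'\<close> by blast
  qed
qed

lemma lidx_spec:
  assumes disj: "\<forall>l<k. \<forall>l'<k. l \<noteq> l' \<longrightarrow> S l \<inter> S l' = {}" and i: "i < d"
  shows "lidx i < k" "\<And>l. l < k \<Longrightarrow> l \<noteq> lidx i \<Longrightarrow> b l i = 0"
proof -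
  have "i \<in> (\<Union>l<k. S l)"
    using Union_S i by simp
  then obtain l where "l < k" "i \<in> S l"
    by blast
  then have "\<exists>!l. l < k \<and> i \<in> S l"
    using disj by blast
  then have lidx_i: "lidx i < k \<and> i \<in> S (lidx i)"
    unfolding lidx_eq by (rule theI')
  then show "lidx i < k"
    by simp
  show "b l i = 0" if "l < k" "l \<noteq> lidx i" for l
  proof (rule ccontr)
    assume "b l i \<noteq> 0"
    then have "i \<in> S l"
      using i by (simp add: mem_S_iff)
    then show False
      using disj lidx_i that by blast
  qed
qed

lemma poly_form_explicit:
  assumes P0: "poly P 0 = 0" and disj: "\<forall>l<k. \<forall>l'<k. l \<noteq> l' \<longrightarrow> S l \<inter> S l' = {}"
  shows "poly_form P (gen_cyc_map w d (\<lambda>i. b (lidx i) i) (\<lambda>i. \<rho> (lidx i)))"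
  unfolding poly_form_def
proof (intro conjI allI)
  fix x
  show "poly P x = gen_cyc_map w d (\<lambda>i. b (lidx i) i) (\<lambda>i. \<rho> (lidx i)) x"
  proof (cases "x = 0")
    case True
    then show ?thesis
      using P0 by (simp add: gen_cyc_map_def)
  next
    case False
    then obtain i where i: "i < d" "x \<in> cyc_coset w d i"
      using cyc_coset_cover by blast
    have "poly P x = (\<Sum>l<k. b l i * x ^ \<rho> l)"
      using poly_on_coset[OF i] P0 by (simp add: poly_0_coeff_0)
    also have "\<dots> = (\<Sum>l<k. if l = lidx i then b l i * x ^ \<rho> l else 0)"
      using lidx_spec(2)[OF disj i(1)] by (intro sum.cong) auto
    also have "\<dots> = b (lidx i) i * x ^ \<rho> (lidx i)"
      using lidx_spec(1)[OF disj i(1)] by simp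
    finally show ?thesis
      using gen_cyc_map_on_coset[OF i] by simp
  qed
qed (rule P_deg)

lemma b_if_poly_form:
  assumes r: "\<forall>i<d. r i \<in> {1..m}" and pf: "poly_form P (gen_cyc_map w d a r)"
    and i: "i < d" and l: "l < k"
  shows "b l i = (if \<rho> l = r i then a i else 0)"
proof -
  have c0: "coeff P 0 = 0"
    using poly_form_gen_cyc_map_at_0[OF pf] by (simp add: poly_0_coeff_0)
  define B where "B s = (\<Sum>l'<k. if \<rho> l' = s then b l' i else 0)" for s
  define A where "A s = (if s = r i then a i else 0)" for s
  have "\<forall>x\<in>cyc_coset w d i. (\<Sum>s\<in>{1..m}. (B s - A s) * x ^ s) = 0"
  proof
    fix x
    assume x: "x \<in> cyc_coset w d i"
    have "(\<Sum>s\<in>{1..m}. (B s - A s) * x ^ s) = (\<Sum>s\<in>{1..m}. B s * x ^ s) - (\<Sum>s\<in>{1..m}. A s * x ^ s)"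
      by (simp add: left_diff_distrib sum_subtractf)
    also have "(\<Sum>s\<in>{1..m}. B s * x ^ s) = (\<Sum>l'<k. \<Sum>s\<in>{1..m}. (if \<rho> l' = s then b l' i else 0) * x ^ s)"
      unfolding B_def sum_distrib_right by (rule sum.swap)
    also have "\<dots> = (\<Sum>l'<k. b l' i * x ^ \<rho> l')"
    proof (rule sum.cong[OF refl])
      fix l'
      assume "l' \<in> {..<k}"
      then have "(\<Sum>s\<in>{1..m}. (if \<rho> l' = s then b l' i else 0) * x ^ s) =
          (\<Sum>s\<in>{1..m}. if \<rho> l' = s then b l' i * x ^ \<rho> l' else 0)"
        by (intro sum.cong) auto
      then show "(\<Sum>s\<in>{1..m}. (if \<rho> l' = s then b l' i else 0) * x ^ s) = b l' i * x ^ \<rho> l'"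
        using rho_range \<open>l' \<in> {..<k}\<close> by simp
    qed
    also have "(\<Sum>s\<in>{1..m}. A s * x ^ s) = (\<Sum>s\<in>{1..m}. if s = r i then a i * x ^ r i else 0)"
      by (intro sum.cong) (auto simp: A_def)
    also have "\<dots> = a i * x ^ r i"
      using r i by simp
    also have "(\<Sum>l'<k. b l' i * x ^ \<rho> l') - a i * x ^ r i = 0"
      using poly_on_coset[OF i x] gen_cyc_map_on_coset[OF i x] pf c0 by (simp add: poly_form_def)
    finally show "(\<Sum>s\<in>{1..m}. (B s - A s) * x ^ s) = 0" .
  qed
  then have "B (\<rho> l) - A (\<rho> l) = 0"
    by (rule coset_monomials_independent[OF i _ rho_range[OF l], where c = "\<lambda>s. B s - A s"])
  moreover have "B (\<rho> l) = b l i"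
  proof -
    have "B (\<rho> l) = (\<Sum>l'<k. if l' = l then b l' i else 0)"
      unfolding B_def using l rho_inj by (intro sum.cong) auto
    then show ?thesis
      using l by simp
  qed
  ultimately show ?thesis
    by (simp add: A_def)
qed

lemma card_le_d_if_poly_form:
  assumes r: "\<forall>i<d. r i \<in> {1..m}" and pf: "poly_form P (gen_cyc_map w d a r)"
  shows "k \<le> d"
proof -
  have c0: "coeff P 0 = 0"
    using poly_form_gen_cyc_map_at_0[OF pf] by (simp add: poly_0_coeff_0)
  have "\<rho> ` {..<k} \<subseteq> r ` {..<d}"
  proof
    fix s
    assume "s \<in> \<rho> ` {..<k}"
    then obtain l where l: "l < k" "s = \<rho> l"
      by blast
    then obtain i where "i < d" "b l i \<noteq> 0"
      using b_nonzero_somewhere[OF c0] by blast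
    then have "\<rho> l = r i"
      using b_if_poly_form[OF r pf _ l(1)] by (auto split: if_splits)
    then show "s \<in> r ` {..<d}"
      using l(2) \<open>i < d\<close> by blast
  qed
  then have "card (\<rho> ` {..<k}) \<le> card (r ` {..<d})"
    by (intro card_mono) auto
  also have "\<dots> \<le> d"
    using card_image_le[of "{..<d}" r] by simp
  finally show ?thesis
    using rho_bij by (simp add: bij_betw_def k_eq)
qed

lemma gen_cyclotomic_iff:
  "(\<exists>a r. (\<forall>i<d. r i \<in> {1..m}) \<and> poly_form P (gen_cyc_map w d a r)) \<longleftrightarrow>
   poly P 0 = 0 \<and> k \<le> d \<and> (\<forall>l<k. \<forall>l'<k. l \<noteq> l' \<longrightarrow> S l \<inter> S l' = {}) \<and>
   (\<Union>l<k. S l) = {0..<d}"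
proof
  assume "\<exists>a r. (\<forall>i<d. r i \<in> {1..m}) \<and> poly_form P (gen_cyc_map w d a r)"
  then obtain a r where r: "\<forall>i<d. r i \<in> {1..m}" and pf: "poly_form P (gen_cyc_map w d a r)"
    by blast
  have "\<forall>i<d. \<forall>l<k. \<forall>l'<k. b l i \<noteq> 0 \<longrightarrow> b l' i \<noteq> 0 \<longrightarrow> l = l'"
    using b_if_poly_form[OF r pf] rho_inj by (metis (full_types))
  then show "poly P 0 = 0 \<and> k \<le> d \<and> (\<forall>l<k. \<forall>l'<k. l \<noteq> l' \<longrightarrow> S l \<inter> S l' = {}) \<and>
      (\<Union>l<k. S l) = {0..<d}"
    using poly_form_gen_cyc_map_at_0[OF pf] card_le_d_if_poly_form[OF r pf] S_disjoint_iff Union_S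
    by blast
next
  assume "poly P 0 = 0 \<and> k \<le> d \<and> (\<forall>l<k. \<forall>l'<k. l \<noteq> l' \<longrightarrow> S l \<inter> S l' = {}) \<and>
      (\<Union>l<k. S l) = {0..<d}"
  then have P0: "poly P 0 = 0" and disj: "\<forall>l<k. \<forall>l'<k. l \<noteq> l' \<longrightarrow> S l \<inter> S l' = {}"
    by blast+
  have "\<forall>i<d. \<rho> (lidx i) \<in> {1..m}"
    using lidx_spec(1)[OF disj] rho_range by blast
  then show "\<exists>a r. (\<forall>i<d. r i \<in> {1..m}) \<and> poly_form P (gen_cyc_map w d a r)"
    using poly_form_explicit[OF P0 disj] by (intro exI[of _ "\<lambda>i. b (lidx i) i"] exI) simp
qed

end

theorem theorem2:
  fixes P :: "'a::{finite,field} poly" and w :: 'a and d :: nat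
  assumes d_pos: "d > 0"
    and d_dvd: "d dvd (card (UNIV :: 'a set) - 1)"
    and prim: "primitive_root w"
    and P_nz: "P \<noteq> 0"
    and P_deg: "degree P \<le> card (UNIV :: 'a set) - 1"
  defines "m \<equiv> (card (UNIV :: 'a set) - 1) div d"
  defines "\<zeta> \<equiv> w ^ m"
  defines "R \<equiv> {rem1 m n | n. coeff P n \<noteq> 0}"
  defines "k \<equiv> card R"
  defines "\<rho> \<equiv> (\<lambda>l. sorted_list_of_set R ! l)"
  defines "v \<equiv> (\<lambda>l j. coeff P (j * m + \<rho> l))"
  defines "b \<equiv> (\<lambda>l. THE bv :: nat \<Rightarrow> 'a. (\<forall>i\<ge>d. bv i = 0) \<and>
              (\<forall>j<d. v l j = inverse (of_nat d) * (\<Sum>i<d. inverse \<zeta> ^ (i * j) * bv i)))"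
  defines "S \<equiv> (\<lambda>l. if l = 0
              then {i. i < d \<and> (b 0 i \<noteq> 0 \<or> (\<forall>l'<k. b l' i = 0))}
              else {i. i < d \<and> b l i \<noteq> 0})"
  defines "cond \<equiv> (poly P 0 = 0 \<and> k \<le> d \<and>
              (\<forall>l<k. \<forall>l'<k. l \<noteq> l' \<longrightarrow> S l \<inter> S l' = {}) \<and>
              (\<Union>l<k. S l) = {0..<d})"
  defines "lidx \<equiv> (\<lambda>i. THE l. l < k \<and> i \<in> S l)"
  shows "((\<exists>a r. (\<forall>i<d. r i \<in> {1..m}) \<and> poly_form P (gen_cyc_map w d a r)) \<longleftrightarrow> cond)
         \<and> (cond \<longrightarrow> poly_form P (gen_cyc_map w d (\<lambda>i. b (lidx i) i) (\<lambda>i. \<rho> (lidx i))))"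
proof -
  interpret cyclotomic_poly w d m \<zeta> P R k \<rho> v b S lidx
    by unfold_locales
      (use d_pos d_dvd prim P_nz P_deg in
        \<open>simp_all add: m_def \<zeta>_def R_def k_def \<rho>_def v_def b_def S_def lidx_def\<close>)
  show ?thesis
    unfolding cond_def using gen_cyclotomic_iff poly_form_explicit by blast
qed

end
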